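(* Let $\mathcal{H}$ be a Hilbert space of finite dimension $d\geq 2$ with orthonormal basis $\{\phi_k\}_{k=1}^d$. Define the instrument $\mathcal{I}$ on $\Omega=\{0,1\}$ by $\mathcal{I}_\omega(T)=L_\omega^* T L_\omega$, where $L_0=|\phi_d\rangle\langle\phi_d|$ and $L_1=\sum_{k=1}^{d-1}|\phi_{k+1}\rangle\langle\phi_k|$. Then: (a) If $1\leq n\leq d-1$, then $\mathsf{A}^\mathcal{I}_n\simeq\mathsf{P}_n$, where $\mathsf{P}_n$ is the sharp observable on $\{1,\ldots,n+1\}$ given by $\mathsf{P}_n(1)=\sum_{l=1}^{d-n}|\phi_l\rangle\langle\phi_l|$ and $\mathsf{P}_n(j)=|\phi_{d-n+j-1}\rangle\langle\phi_{d-n+j-1}|$ for $2\leq j\leq n+1$. (b) If $n\geq d-1$, then $\mathsf{A}^\mathcal{I}_n\simeq\mathsf{P}_{d-1}$, where $\mathsf{P}_{d-1}(j)=|\phi_j\rangle\langle\phi_j|$ for $1\leq j\leq d$.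
   Context: An observable with finite outcome set is a map $\omega\mapsto\mathsf{A}(\omega)$ into positive operators summing to $\mathbb{1}$; it is sharp if each $\mathsf{A}(\omega)$ is a projection. For finite-outcome observables, $\mathsf{A}\preceq\mathsf{B}$ means there is $\kappa:\Omega_\mathsf{A}\times\Omega_\mathsf{B}\to[0,1]$ with $\sum_\omega\kappa(\omega|\omega')=1$ for all $\omega'$ and $\mathsf{A}(\omega)=\sum_{\omega'}\kappa(\omega|\omega')\mathsf{B}(\omega')$; $\mathsf{A}\simeq\mathsf{B}$ means both $\mathsf{A}\preceq\mathsf{B}$ and $\mathsf{B}\preceq\mathsf{A}$. For an instrument $\mathcal{I}$, $\mathsf{A}^\mathcal{I}_n$ is the observable on $\Omega^n$ with $\mathsf{A}^\mathcal{I}_n(\omega_1,\ldots,\omega_n)=\mathcal{I}_{\omega_1}\circ\cdots\circ\mathcal{I}_{\omega_n}(\mathbb{1})$. *)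

theory Defs
  imports Complex_Main "Jordan_Normal_Form.Schur_Decomposition"
begin

text \<open>The Hilbert space is C^d with orthonormal basis the standard unit vectors.
  The paper's basis vector phi_k (k = 1..d) is the unit vector with index k - 1 here.\<close>

definition ketbra :: "nat \<Rightarrow> nat \<Rightarrow> nat \<Rightarrow> complex mat" where
  "ketbra d i j = mat d d (\<lambda>(a, b). if a = i \<and> b = j then 1 else 0)"

definition Lop :: "nat \<Rightarrow> nat \<Rightarrow> complex mat" where
  "Lop d \<omega> = (if \<omega> = 0 then ketbra d (d - 1) (d - 1)
              else mat d d (\<lambda>(a, b). \<Sum>k\<in>{1..d-1}. ketbra d k (k - 1) $$ (a, b)))"

definition instr :: "nat \<Rightarrow> nat \<Rightarrow> complex mat \<Rightarrow> complex mat" where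
  "instr d \<omega> T = mat_adjoint (Lop d \<omega>) * T * Lop d \<omega>"

definition outcomes_n :: "nat \<Rightarrow> nat list set" where
  "outcomes_n n = {ws. length ws = n \<and> set ws \<subseteq> {0, 1}}"

definition A_n :: "nat \<Rightarrow> nat list \<Rightarrow> complex mat" where
  "A_n d ws = foldr (instr d) ws (1\<^sub>m d)"

definition P_n :: "nat \<Rightarrow> nat \<Rightarrow> nat \<Rightarrow> complex mat" where
  "P_n d n j = (if j = 1
       then mat d d (\<lambda>(a, b). \<Sum>l\<in>{1..d-n}. ketbra d (l - 1) (l - 1) $$ (a, b))
       else ketbra d (d - n + j - 2) (d - n + j - 2))"

definition postproc :: "nat \<Rightarrow> 'a set \<Rightarrow> ('a \<Rightarrow> complex mat) \<Rightarrow> 'b set \<Rightarrow> ('b \<Rightarrow> complex mat) \<Rightarrow> bool" where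
  "postproc d \<Omega>A A \<Omega>B B \<longleftrightarrow>
     (\<exists>\<kappa> :: 'a \<Rightarrow> 'b \<Rightarrow> real.
        (\<forall>\<omega>\<in>\<Omega>A. \<forall>\<omega>'\<in>\<Omega>B. 0 \<le> \<kappa> \<omega> \<omega>' \<and> \<kappa> \<omega> \<omega>' \<le> 1) \<and>
        (\<forall>\<omega>'\<in>\<Omega>B. (\<Sum>\<omega>\<in>\<Omega>A. \<kappa> \<omega> \<omega>') = 1) \<and>
        (\<forall>\<omega>\<in>\<Omega>A. A \<omega> = mat d d (\<lambda>(a, b). \<Sum>\<omega>'\<in>\<Omega>B. complex_of_real (\<kappa> \<omega> \<omega>') * B \<omega>' $$ (a, b))))"

definition obs_equiv :: "nat \<Rightarrow> 'a set \<Rightarrow> ('a \<Rightarrow> complex mat) \<Rightarrow> 'b set \<Rightarrow> ('b \<Rightarrow> complex mat) \<Rightarrow> bool" where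
  "obs_equiv d \<Omega>A A \<Omega>B B \<longleftrightarrow> postproc d \<Omega>A A \<Omega>B B \<and> postproc d \<Omega>B B \<Omega>A A"

end

theory Submission
  imports Defs
begin

text \<open>Both Kraus operators send every basis vector to a basis vector or to zero, so each effect
  A_n(w) is the diagonal projection onto the basis vectors that survive the word w:
  L_1 shifts phi_k to phi_(k+1) and L_0 keeps only phi_d. Only the words 1^m 0^(n-m) have
  survivors, namely phi_(d-m) when m < n and phi_1, ..., phi_(d-n) when m = n. Hence, up to
  relabelling and up to outcomes with zero effect, A_n is the sharp observable P_k with
  k = min n (d - 1), and such observables are post-processings of each other.\<close>

lemma mat_adjoint_mat: "mat_adjoint (mat m n f) = mat n m (\<lambda>(i, j). cnj (f (j, i)))"
  by (rule eq_matI) (auto simp: mat_adjoint_def mat_of_rows_def)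

definition diag_proj :: "nat \<Rightarrow> nat set \<Rightarrow> complex mat" where
  "diag_proj d S = mat d d (\<lambda>(a, b). if a = b \<and> a \<in> S then 1 else 0)"

lemma diag_proj_cong: "S \<inter> {..<d} = T \<inter> {..<d} \<Longrightarrow> diag_proj d S = diag_proj d T"
  by (rule eq_matI) (auto simp: diag_proj_def)

lemma diag_proj_empty: "S \<inter> {..<d} = {} \<Longrightarrow> diag_proj d S = 0\<^sub>m d d"
  by (rule eq_matI) (auto simp: diag_proj_def)

lemma ketbra_diag: "ketbra d c c = diag_proj d {c}"
  by (rule eq_matI) (auto simp: ketbra_def diag_proj_def)

definition basis_map :: "nat \<Rightarrow> nat set \<Rightarrow> (nat \<Rightarrow> nat) \<Rightarrow> complex mat" where
  "basis_map d D \<sigma> = mat d d (\<lambda>(a, b). if b \<in> D \<and> a = \<sigma> b then 1 else 0)"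

lemma Lop_0: "Lop d 0 = basis_map d {d - 1} id"
  by (rule eq_matI) (auto simp: Lop_def ketbra_def basis_map_def)

lemma Lop_shift: "\<omega> \<noteq> 0 \<Longrightarrow> Lop d \<omega> = basis_map d UNIV Suc"
proof (rule eq_matI)
  fix a b assume "\<omega> \<noteq> 0" "a < dim_row (basis_map d UNIV Suc)" "b < dim_col (basis_map d UNIV Suc)"
  then have ab: "a < d" "b < d" and "\<omega> \<noteq> 0" by (auto simp: basis_map_def)
  then have "(\<Sum>k\<in>{1..d-1}. ketbra d k (k - 1) $$ (a, b))
      = (\<Sum>k\<in>{1..d-1}. if k = a then (if a = Suc b then 1 else 0) else 0)"
    by (intro sum.cong) (auto simp: ketbra_def)
  also have "\<dots> = (if a = Suc b then 1 else 0)"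
    using ab by (auto simp: sum.delta)
  finally show "Lop d \<omega> $$ (a, b) = basis_map d UNIV Suc $$ (a, b)"
    using ab \<open>\<omega> \<noteq> 0\<close> by (simp add: Lop_def basis_map_def)
qed (auto simp: Lop_def basis_map_def)

lemma adjoint_basis_map:
  "mat_adjoint (basis_map d D \<sigma>) = mat d d (\<lambda>(a, i). if a \<in> D \<and> i = \<sigma> a then 1 else 0)"
  by (rule eq_matI) (auto simp: basis_map_def mat_adjoint_mat)

lemma adjoint_basis_map_mult_diag_proj:
  "mat_adjoint (basis_map d D \<sigma>) * diag_proj d S
     = mat d d (\<lambda>(a, k). if a \<in> D \<and> k = \<sigma> a \<and> k \<in> S then 1 else 0)"
proof (rule eq_matI)
  fix a k assume "a < dim_row (mat d d (\<lambda>(a, k). if a \<in> D \<and> k = \<sigma> a \<and> k \<in> S then 1 else 0 :: complex))"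
    "k < dim_col (mat d d (\<lambda>(a, k). if a \<in> D \<and> k = \<sigma> a \<and> k \<in> S then 1 else 0 :: complex))"
  then have ak: "a < d" "k < d" by auto
  have "(mat_adjoint (basis_map d D \<sigma>) * diag_proj d S) $$ (a, k)
      = (\<Sum>i = 0..<d. (if a \<in> D \<and> i = \<sigma> a then 1 else 0) * (if i = k \<and> i \<in> S then 1 else 0))"
    using ak by (simp add: adjoint_basis_map diag_proj_def scalar_prod_def)
  also have "\<dots> = (\<Sum>i = 0..<d. if i = k then (if a \<in> D \<and> k = \<sigma> a \<and> k \<in> S then 1 else 0) else 0)"
    by (rule sum.cong) auto
  also have "\<dots> = mat d d (\<lambda>(a, k). if a \<in> D \<and> k = \<sigma> a \<and> k \<in> S then 1 else 0) $$ (a, k)"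
    using ak by (simp add: sum.delta)
  finally show "(mat_adjoint (basis_map d D \<sigma>) * diag_proj d S) $$ (a, k)
      = mat d d (\<lambda>(a, k). if a \<in> D \<and> k = \<sigma> a \<and> k \<in> S then 1 else 0) $$ (a, k)" .
qed (auto simp: adjoint_basis_map diag_proj_def)

lemma basis_map_conj_diag_proj:
  assumes "inj_on \<sigma> D"
  shows "mat_adjoint (basis_map d D \<sigma>) * diag_proj d S * basis_map d D \<sigma>
           = diag_proj d {b \<in> D. \<sigma> b \<in> S \<and> \<sigma> b < d}"
proof (rule eq_matI)
  fix a b assume "a < dim_row (diag_proj d {b \<in> D. \<sigma> b \<in> S \<and> \<sigma> b < d})"
    "b < dim_col (diag_proj d {b \<in> D. \<sigma> b \<in> S \<and> \<sigma> b < d})"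
  then have ab: "a < d" "b < d" by (auto simp: diag_proj_def)
  have "(mat_adjoint (basis_map d D \<sigma>) * diag_proj d S * basis_map d D \<sigma>) $$ (a, b)
      = (\<Sum>k = 0..<d. (if a \<in> D \<and> k = \<sigma> a \<and> k \<in> S then 1 else 0)
                       * (if b \<in> D \<and> k = \<sigma> b then 1 else 0))"
    unfolding adjoint_basis_map_mult_diag_proj using ab by (simp add: basis_map_def scalar_prod_def)
  also have "\<dots> = (\<Sum>k = 0..<d. if k = \<sigma> a
                     then (if a \<in> D \<and> \<sigma> a \<in> S \<and> b \<in> D \<and> \<sigma> a = \<sigma> b then 1 else 0) else 0)"
    by (rule sum.cong) auto
  also have "\<dots> = (if a \<in> D \<and> \<sigma> a \<in> S \<and> \<sigma> a < d \<and> b \<in> D \<and> \<sigma> a = \<sigma> b then 1 else 0)"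
    by (auto simp: sum.delta)
  also have "\<dots> = diag_proj d {b \<in> D. \<sigma> b \<in> S \<and> \<sigma> b < d} $$ (a, b)"
    using ab assms by (auto simp: diag_proj_def dest: inj_onD)
  finally show "(mat_adjoint (basis_map d D \<sigma>) * diag_proj d S * basis_map d D \<sigma>) $$ (a, b)
      = diag_proj d {b \<in> D. \<sigma> b \<in> S \<and> \<sigma> b < d} $$ (a, b)" .
qed (simp_all add: mat_adjoint_mat diag_proj_def basis_map_def)

lemma instr_0_diag_proj: "instr d 0 (diag_proj d S) = diag_proj d (S \<inter> {d - 1})"
  unfolding instr_def Lop_0 by (auto simp: basis_map_conj_diag_proj intro: diag_proj_cong)

lemma instr_shift_diag_proj:
  "\<omega> \<noteq> 0 \<Longrightarrow> instr d \<omega> (diag_proj d S) = diag_proj d {i. Suc i \<in> S \<and> Suc i < d}"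
  unfolding instr_def Lop_shift by (auto simp: basis_map_conj_diag_proj intro: diag_proj_cong)

fun survivors :: "nat \<Rightarrow> nat list \<Rightarrow> nat set" where
  "survivors d [] = {..<d}"
| "survivors d (w # ws) = (if w = 0 then survivors d ws \<inter> {d - 1} else {i. Suc i \<in> survivors d ws})"

lemma survivors_subset: "survivors d ws \<subseteq> {..<d}"
  by (induction ws) auto

lemma A_n_eq_diag_proj: "A_n d ws = diag_proj d (survivors d ws)"
proof (induction ws)
  case Nil
  show ?case by (rule eq_matI) (auto simp: A_n_def diag_proj_def)
next
  case (Cons w ws)
  have "A_n d (w # ws) = instr d w (diag_proj d (survivors d ws))"
    using Cons.IH by (simp add: A_n_def)
  also have "\<dots> = diag_proj d (survivors d (w # ws))"
    using survivors_subset[of d ws]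
    by (cases "w = 0") (auto simp: instr_0_diag_proj instr_shift_diag_proj intro!: diag_proj_cong)
  finally show ?case .
qed

definition ones_zeros :: "nat \<Rightarrow> nat \<Rightarrow> nat list" where
  "ones_zeros m n = replicate m 1 @ replicate (n - m) 0"

lemma ones_zeros_in_outcomes: "m \<le> n \<Longrightarrow> ones_zeros m n \<in> outcomes_n n"
  by (auto simp: ones_zeros_def outcomes_n_def)

lemma ones_zeros_inject: "ones_zeros m n = ones_zeros m' n \<Longrightarrow> m \<le> n \<Longrightarrow> m' \<le> n \<Longrightarrow> m = m'"
  by (drule arg_cong[where f = sum_list]) (simp add: ones_zeros_def sum_list_replicate)

lemma survivors_replicate_1: "survivors d (replicate m 1 @ ws) = {i. i + m \<in> survivors d ws}"
  by (induction m) auto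

lemma survivors_replicate_0: "survivors d (replicate (Suc k) 0) = {..<d} \<inter> {d - 1}"
  by (induction k) auto

lemma survivors_Cons_0_nonempty: "survivors d (0 # ws) \<noteq> {} \<Longrightarrow> ws = replicate (length ws) 0"
proof (induction ws)
  case (Cons w ws)
  then show ?case using survivors_subset[of d ws] by (cases "w = 0") auto
qed simp

lemma nonempty_survivors_imp_ones_zeros:
  "set ws \<subseteq> {0, 1} \<Longrightarrow> survivors d ws \<noteq> {} \<Longrightarrow> \<exists>m \<le> length ws. ws = ones_zeros m (length ws)"
proof (induction ws)
  case Nil
  then show ?case by (simp add: ones_zeros_def)
next
  case (Cons w ws)
  show ?case
  proof (cases "w = 0")
    case True
    then have "w # ws = ones_zeros 0 (length (w # ws))"
      using survivors_Cons_0_nonempty[of d ws] Cons.prems by (simp add: ones_zeros_def)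
    then show ?thesis by blast
  next
    case False
    with Cons obtain m where "m \<le> length ws" "ws = ones_zeros m (length ws)" "w = 1"
      by auto
    then have "w # ws = ones_zeros (Suc m) (length (w # ws))"
      by (simp add: ones_zeros_def)
    moreover have "Suc m \<le> length (w # ws)"
      using \<open>m \<le> length ws\<close> by simp
    ultimately show ?thesis by blast
  qed
qed

lemma survivors_ones_zeros:
  assumes "m \<le> n"
  shows "survivors d (ones_zeros m n) = (if m < n then {i. i + m + 1 = d} else {i. i + m < d})"
proof -
  have *: "survivors d (ones_zeros m n) = {i. i + m \<in> survivors d (replicate (n - m) 0)}"
    unfolding ones_zeros_def survivors_replicate_1 ..
  show ?thesis
  proof (cases "m < n")
    case True
    then obtain k where "n - m = Suc k" by (metis Suc_diff_Suc)
    with True show ?thesis unfolding * \<open>n - m = Suc k\<close> survivors_replicate_0 by auto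
  next
    case False
    with assms show ?thesis unfolding * by simp
  qed
qed

lemma A_n_ones_zeros:
  "m \<le> n \<Longrightarrow> A_n d (ones_zeros m n) = diag_proj d (if m < n then {i. i + m + 1 = d} else {i. i + m < d})"
  by (simp add: A_n_eq_diag_proj survivors_ones_zeros)

lemma A_n_eq_0_unless_short_ones_zeros:
  assumes "ws \<in> outcomes_n n" "\<forall>m \<le> min n (d - 1). ws \<noteq> ones_zeros m n"
  shows "A_n d ws = 0\<^sub>m d d"
proof (cases "\<exists>m \<le> n. ws = ones_zeros m n")
  case True
  then obtain m where m: "m \<le> n" "ws = ones_zeros m n" by blast
  with assms(2) have "d \<le> m" by auto
  with m show ?thesis
    by (auto simp: A_n_ones_zeros intro: diag_proj_empty)
next
  case False
  then have "survivors d ws = {}"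
    using assms(1) nonempty_survivors_imp_ones_zeros[of ws d] by (auto simp: outcomes_n_def)
  then show ?thesis by (simp add: A_n_eq_diag_proj diag_proj_empty)
qed

lemma P_n_1: "P_n d n 1 = diag_proj d {..<d - n}"
proof (rule eq_matI)
  fix a b assume "a < dim_row (diag_proj d {..<d - n})" "b < dim_col (diag_proj d {..<d - n})"
  then have ab: "a < d" "b < d" by (auto simp: diag_proj_def)
  have "(\<Sum>l\<in>{1..d-n}. ketbra d (l - 1) (l - 1) $$ (a, b))
      = (\<Sum>l\<in>{1..d-n}. if l = Suc a then (if a = b then 1 else 0) else 0)"
    using ab by (intro sum.cong) (auto simp: ketbra_def)
  also have "\<dots> = diag_proj d {..<d - n} $$ (a, b)"
    using ab by (auto simp: sum.delta diag_proj_def)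
  finally show "P_n d n 1 $$ (a, b) = diag_proj d {..<d - n} $$ (a, b)"
    using ab by (simp add: P_n_def)
qed (auto simp: P_n_def diag_proj_def)

lemma P_n_singleton: "j \<noteq> 1 \<Longrightarrow> P_n d n j = diag_proj d {d - n + j - 2}"
  by (simp add: P_n_def ketbra_diag)

lemma P_n_carrier: "P_n d n j \<in> carrier_mat d d"
  by (simp add: P_n_def ketbra_def)

lemma mat_weighted_sum_single:
  fixes B :: "'a \<Rightarrow> complex mat"
  assumes "finite \<Omega>" "c \<in> \<Omega>" "B c \<in> carrier_mat d d" "k c = 1"
    and "\<And>x. x \<in> \<Omega> \<Longrightarrow> x \<noteq> c \<Longrightarrow> k x = 0 \<or> B x = 0\<^sub>m d d"
  shows "mat d d (\<lambda>(a, b). \<Sum>x\<in>\<Omega>. complex_of_real (k x) * B x $$ (a, b)) = B c"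
proof (rule eq_matI)
  fix a b assume "a < dim_row (B c)" "b < dim_col (B c)"
  then have ab: "a < d" "b < d" using assms(3) by auto
  have "(\<Sum>x\<in>\<Omega>. complex_of_real (k x) * B x $$ (a, b)) = (\<Sum>x\<in>{c}. complex_of_real (k x) * B x $$ (a, b))"
    using assms ab by (intro sum.mono_neutral_right) fastforce+
  with ab assms(4) show "mat d d (\<lambda>(a, b). \<Sum>x\<in>\<Omega>. complex_of_real (k x) * B x $$ (a, b)) $$ (a, b) = B c $$ (a, b)"
    by simp
qed (use assms(3) in auto)

lemma obs_equiv_relabel:
  assumes fin: "finite \<Omega>A" "finite \<Omega>B" and nonempty: "\<Omega>B \<noteq> {}"
    and g: "g ` \<Omega>B \<subseteq> \<Omega>A" "inj_on g \<Omega>B"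
    and relabel: "\<And>j. j \<in> \<Omega>B \<Longrightarrow> A (g j) = B j"
    and zero: "\<And>\<omega>. \<omega> \<in> \<Omega>A - g ` \<Omega>B \<Longrightarrow> A \<omega> = 0\<^sub>m d d"
    and carrier: "\<And>j. j \<in> \<Omega>B \<Longrightarrow> B j \<in> carrier_mat d d"
  shows "obs_equiv d \<Omega>A A \<Omega>B B"
  unfolding obs_equiv_def
proof
  show "postproc d \<Omega>A A \<Omega>B B"
    unfolding postproc_def
  proof (intro exI[of _ "\<lambda>\<omega> j. if \<omega> = g j then 1 else 0"] conjI ballI)
    fix j assume "j \<in> \<Omega>B"
    then show "(\<Sum>\<omega>\<in>\<Omega>A. if \<omega> = g j then 1 else 0) = (1::real)"
      using fin g by (auto simp: sum.delta)
  next
    fix \<omega> assume "\<omega> \<in> \<Omega>A"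
    show "A \<omega> = mat d d (\<lambda>(a, b). \<Sum>j\<in>\<Omega>B. complex_of_real (if \<omega> = g j then 1 else 0) * B j $$ (a, b))"
    proof (cases "\<omega> \<in> g ` \<Omega>B")
      case True
      then obtain i where i: "i \<in> \<Omega>B" "\<omega> = g i" by auto
      have "mat d d (\<lambda>(a, b). \<Sum>j\<in>\<Omega>B. complex_of_real (if \<omega> = g j then 1 else 0) * B j $$ (a, b)) = B i"
        using fin i carrier g by (intro mat_weighted_sum_single) (auto dest: inj_onD)
      with i relabel show ?thesis by simp
    next
      case False
      then have "\<omega> \<noteq> g j" if "j \<in> \<Omega>B" for j
        using that by blast
      then show ?thesis
        using zero \<open>\<omega> \<in> \<Omega>A\<close> False by (intro eq_matI) (auto intro!: sum.neutral)
    qed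
  qed simp_all
next
  obtain j0 where "j0 \<in> \<Omega>B" using nonempty by blast
  \<comment> \<open>outcomes with zero effect may be sent to any outcome of B, here to j0\<close>
  define h where "h \<omega> = (if \<omega> \<in> g ` \<Omega>B then the_inv_into \<Omega>B g \<omega> else j0)" for \<omega>
  have h_in: "h \<omega> \<in> \<Omega>B" for \<omega>
    using \<open>j0 \<in> \<Omega>B\<close> g by (auto simp: h_def the_inv_into_into)
  have h_g: "j \<in> \<Omega>B \<Longrightarrow> h (g j) = j" for j
    using g by (simp add: h_def the_inv_into_f_f)
  have g_h: "\<omega> \<in> g ` \<Omega>B \<Longrightarrow> g (h \<omega>) = \<omega>" for \<omega>
    using g by (simp add: h_def f_the_inv_into_f)
  show "postproc d \<Omega>B B \<Omega>A A"
    unfolding postproc_def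
  proof (intro exI[of _ "\<lambda>j \<omega>. if j = h \<omega> then 1 else 0"] conjI ballI)
    fix \<omega> assume "\<omega> \<in> \<Omega>A"
    show "(\<Sum>j\<in>\<Omega>B. if j = h \<omega> then 1 else 0) = (1::real)"
      using fin h_in by (simp add: sum.delta')
  next
    fix j assume j: "j \<in> \<Omega>B"
    have "mat d d (\<lambda>(a, b). \<Sum>\<omega>\<in>\<Omega>A. complex_of_real (if j = h \<omega> then 1 else 0) * A \<omega> $$ (a, b)) = A (g j)"
    proof (rule mat_weighted_sum_single)
      fix \<omega> assume "\<omega> \<in> \<Omega>A" "\<omega> \<noteq> g j"
      then show "(if j = h \<omega> then 1 else 0) = 0 \<or> A \<omega> = 0\<^sub>m d d"
        using g_h zero by fastforce
    qed (use fin j g h_g relabel carrier in auto)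
    with j relabel show "B j = mat d d (\<lambda>(a, b). \<Sum>\<omega>\<in>\<Omega>A. complex_of_real (if j = h \<omega> then 1 else 0) * A \<omega> $$ (a, b))"
      by simp
  qed simp_all
qed

lemma finite_outcomes_n: "finite (outcomes_n n)"
proof -
  have "outcomes_n n = {ws. set ws \<subseteq> {0, 1} \<and> length ws = n}"
    by (auto simp: outcomes_n_def)
  then show ?thesis by (simp add: finite_lists_length_eq)
qed

lemma A_n_equiv_P_n_min:
  fixes d n :: nat
  defines "k \<equiv> min n (d - 1)"
  shows "obs_equiv d (outcomes_n n) (A_n d) {1..k + 1} (P_n d k)"
proof -
  define m where "m j = (if j \<le> 1 then k else k + 1 - j)" for j :: nat
  have m_le: "m j \<le> k" for j
    by (auto simp: m_def)
  have m_onto: "\<exists>j \<in> {1..k + 1}. m j = l" if "l \<le> k" for l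
    using that by (intro bexI[of _ "if l = k then 1 else k + 1 - l"]) (auto simp: m_def)
  have k_le: "k \<le> n" and k_le_d: "k \<le> d - 1"
    by (simp_all add: k_def)
  show ?thesis
  proof (rule obs_equiv_relabel[where g = "\<lambda>j. ones_zeros (m j) n"])
    show "(\<lambda>j. ones_zeros (m j) n) ` {1..k + 1} \<subseteq> outcomes_n n"
      using m_le k_le by (auto intro: ones_zeros_in_outcomes order_trans)
    show "inj_on (\<lambda>j. ones_zeros (m j) n) {1..k + 1}"
    proof (rule inj_onI)
      fix i j assume "i \<in> {1..k + 1}" "j \<in> {1..k + 1}" "ones_zeros (m i) n = ones_zeros (m j) n"
      moreover from this have "m i = m j"
        using m_le k_le by (auto intro: ones_zeros_inject order_trans)
      ultimately show "i = j"
        by (auto simp: m_def split: if_splits)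
    qed
    show "A_n d (ones_zeros (m j) n) = P_n d k j" if "j \<in> {1..k + 1}" for j
    proof (cases "j = 1")
      case True
      then show ?thesis
        using k_le unfolding A_n_ones_zeros[OF order_trans[OF m_le k_le]] P_n_1 True
        by (intro diag_proj_cong) (auto simp: m_def k_def)
    next
      case False
      with that k_le k_le_d show ?thesis
        unfolding A_n_ones_zeros[OF order_trans[OF m_le k_le]] P_n_singleton[OF False]
        by (intro diag_proj_cong) (auto simp: m_def)
    qed
    show "A_n d ws = 0\<^sub>m d d" if "ws \<in> outcomes_n n - (\<lambda>j. ones_zeros (m j) n) ` {1..k + 1}" for ws
    proof (rule A_n_eq_0_unless_short_ones_zeros)
      show "ws \<in> outcomes_n n" using that by blast
      show "\<forall>l \<le> min n (d - 1). ws \<noteq> ones_zeros l n"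
        unfolding k_def[symmetric] using that m_onto by blast
    qed
  qed (auto simp: finite_outcomes_n P_n_carrier)
qed

theorem proposition3:
  fixes d :: nat
  assumes "d \<ge> 2"
  shows "\<forall>n::nat.
           (1 \<le> n \<and> n \<le> d - 1 \<longrightarrow>
              obs_equiv d (outcomes_n n) (A_n d) {1..n+1} (P_n d n)) \<and>
           (d - 1 \<le> n \<longrightarrow>
              obs_equiv d (outcomes_n n) (A_n d) {1..d} (P_n d (d - 1)))"
proof (intro allI conjI impI)
  fix n :: nat
  show "obs_equiv d (outcomes_n n) (A_n d) {1..n+1} (P_n d n)" if "1 \<le> n \<and> n \<le> d - 1"
    using A_n_equiv_P_n_min[of d n] that by (simp add: min_absorb1)
  show "obs_equiv d (outcomes_n n) (A_n d) {1..d} (P_n d (d - 1))" if "d - 1 \<le> n"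
    using A_n_equiv_P_n_min[of d n] that assms by (simp add: min_absorb2)
qed

end
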